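(* For any planar graph $G$, if $\mathcal{B}=\{N[v]\mid v\in V(G)\}$, then NCTD$(\mathcal{B})\le 5$.
   Context: $N[v]$ is the closed neighborhood of $v$. A teaching map for $\mathcal{B}$ assigns to each $B\in\mathcal{B}$ a set $T(B)\subseteq V(G)$ (examples labeled by membership in $B$). A vertex $w$ distinguishes $B,B'$ if $w$ lies in exactly one of them. $T$ is non-clashing if for all distinct $B,B'\in\mathcal{B}$ some $w\in T(B)\cup T(B')$ distinguishes them; its size is $\max_{B\in\mathcal{B}}|T(B)|$. NCTD$(\mathcal{B})$ is the minimum size of a non-clashing teaching map for $\mathcal{B}$. *)

theory Defs
  imports "HOL-Analysis.Analysis"
begin

definition simple_graph :: "'a set \<Rightarrow> 'a set set \<Rightarrow> bool" where
  "simple_graph V E \<longleftrightarrow> finite V \<and>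
     (\<forall>e\<in>E. \<exists>u v. e = {u, v} \<and> u \<noteq> v \<and> u \<in> V \<and> v \<in> V)"

definition planar_graph :: "'a set \<Rightarrow> 'a set set \<Rightarrow> bool" where
  "planar_graph V E \<longleftrightarrow> simple_graph V E \<and>
     (\<exists>(p :: 'a \<Rightarrow> complex) (\<gamma> :: 'a set \<Rightarrow> real \<Rightarrow> complex).
        inj_on p V \<and>
        (\<forall>e\<in>E. arc (\<gamma> e) \<and> {pathstart (\<gamma> e), pathfinish (\<gamma> e)} = p ` e \<and>
                 path_image (\<gamma> e) \<inter> p ` V = p ` e) \<and>
        (\<forall>e\<in>E. \<forall>e'\<in>E. e \<noteq> e' \<longrightarrow>
                 path_image (\<gamma> e) \<inter> path_image (\<gamma> e') \<subseteq> p ` (e \<inter> e')))"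

definition closed_nbhd :: "'a set \<Rightarrow> 'a set set \<Rightarrow> 'a \<Rightarrow> 'a set" where
  "closed_nbhd V E v = insert v {u \<in> V. {u, v} \<in> E}"

definition teaching_map :: "'a set \<Rightarrow> 'a set set \<Rightarrow> ('a set \<Rightarrow> 'a set) \<Rightarrow> bool" where
  "teaching_map V \<B> T \<longleftrightarrow> (\<forall>B\<in>\<B>. T B \<subseteq> V)"

definition distinguishes :: "'a \<Rightarrow> 'a set \<Rightarrow> 'a set \<Rightarrow> bool" where
  "distinguishes w B B' \<longleftrightarrow> (w \<in> B) \<noteq> (w \<in> B')"

definition non_clashing :: "'a set set \<Rightarrow> ('a set \<Rightarrow> 'a set) \<Rightarrow> bool" where
  "non_clashing \<B> T \<longleftrightarrow>
     (\<forall>B\<in>\<B>. \<forall>B'\<in>\<B>. B \<noteq> B' \<longrightarrow> (\<exists>w \<in> T B \<union> T B'. distinguishes w B B'))"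

text \<open>NCTD: minimum size (max over B of |T(B)|) of a non-clashing teaching map.
  Size at most k is expressed as: every T(B) is finite with at most k elements.\<close>
definition NCTD :: "'a set \<Rightarrow> 'a set set \<Rightarrow> nat" where
  "NCTD V \<B> = (LEAST k. \<exists>T. teaching_map V \<B> T \<and> non_clashing \<B> T \<and>
                              (\<forall>B\<in>\<B>. finite (T B) \<and> card (T B) \<le> k))"

end

theory Submission
  imports Defs
begin

(* Planar graphs contain no K_{3,3}.  In a plane drawing, the hexagon x0 y0 x1 y1 x2 y2 of a K_{3,3}
   is a Jordan curve, and each of the three chords x0y1, x1y2, x2y0 lies inside or outside it.  For any
   two chords, the ends of the first split the hexagon into arcs A and B, the first chord is a third arc
   C between the same ends, and the second chord joins an interior point of A to one of B.  By the
   Jordan curve theorem for such theta graphs the two chords lie on opposite sides of the hexagon,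
   which is impossible for three chords.

   In a K_{3,3}-free graph every vertex v has a set S of at most four neighbours such that each
   neighbour u with S \<subseteq> N[u] has N[v] \<subseteq> N[u].  If N(v) is a clique, S is empty.  Otherwise choose
   non-adjacent neighbours a, b; the neighbours u with a, b \<in> N[u] but N[v] not contained in N[u] are
   common neighbours of v, a and b, so there are at most two of them, and S consists of a, b and one
   vertex of N[v] - N[u] for each such u.  Teaching N[v] by {v} \<union> S is non-clashing: two distinct
   closed neighbourhoods N[v], N[v'] are told apart by v if v and v' are not adjacent, and otherwise
   by a vertex of S or of the set chosen for v'. *)

section \<open>Arcs, insides and outsides in the plane\<close>

abbreviation arc_interior :: "(real \<Rightarrow> 'a::topological_space) \<Rightarrow> 'a set" where
  "arc_interior g \<equiv> path_image g - {pathstart g, pathfinish g}"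

lemma simple_path_image_subset_closure_endless:
  assumes "simple_path c"
  shows "path_image c \<subseteq> closure (arc_interior c)"
proof -
  have "continuous_on (closure {0<..<1}) c"
    using assms by (simp add: simple_path_def path_def)
  then have "c ` closure {0<..<1} \<subseteq> closure (c ` {0<..<1})"
    by (rule image_closure_subset) (simp_all add: closure_subset)
  then show ?thesis
    unfolding simple_path_endless[OF assms] by (simp add: path_image_def)
qed

lemma connected_insert_closure:
  assumes "connected S" "x \<in> closure S"
  shows "connected (insert x S)"
  by (rule connected_intermediate_closure[OF assms(1)]) (use assms(2) closure_subset in auto)

lemma connected_subset_inside:
  assumes "connected T" "T \<inter> S = {}" "z \<in> T" "z \<in> inside S"
  shows "T \<subseteq> inside S"
proof
  fix t assume "t \<in> T"
  then have "t \<in> connected_component_set (- S) z"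
    using connected_component_maximal[of z T "- S"] assms by blast
  then have "connected_component_set (- S) t = connected_component_set (- S) z"
    by (rule connected_component_eq)
  moreover have "t \<notin> S"
    using assms(2) \<open>t \<in> T\<close> by blast
  ultimately show "t \<in> inside S"
    using assms(4) by (simp add: inside_def)
qed

lemma connected_subset_outside:
  assumes "connected T" "T \<inter> S = {}" "z \<in> T" "z \<in> outside S"
  shows "T \<subseteq> outside S"
proof
  fix t assume "t \<in> T"
  then have "t \<in> connected_component_set (- S) z"
    using connected_component_maximal[of z T "- S"] assms by blast
  then have "connected_component_set (- S) t = connected_component_set (- S) z"
    by (rule connected_component_eq)
  moreover have "t \<notin> S"
    using assms(2) \<open>t \<in> T\<close> by blast
  ultimately show "t \<in> outside S"
    using assms(4) by (simp add: outside_def)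
qed

lemma connected_component_outside:
  assumes "connected (outside S)" "z \<in> outside S" "w \<in> outside S"
  shows "connected_component (- S) z w"
  unfolding connected_component_def using assms outside_no_overlap[of S] by blast

lemma outside_connected_component:
  assumes "connected_component (- S) z w" "w \<in> outside S"
  shows "z \<in> outside S"
proof -
  obtain T where "connected T" "T \<subseteq> - S" "z \<in> T" "w \<in> T"
    using assms(1) unfolding connected_component_def by blast
  then show ?thesis
    using connected_subset_outside[of T S w] assms(2) by blast
qed

lemma connected_inside_or_outside:
  assumes "connected T" "T \<inter> S = {}"
  shows "T \<subseteq> inside S \<or> T \<subseteq> outside S"
proof (cases "T = {}")
  case False
  then obtain z where "z \<in> T" by blast
  moreover have "z \<in> inside S \<or> z \<in> outside S"
    using \<open>z \<in> T\<close> assms(2) inside_Un_outside[of S] by blast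
  ultimately show ?thesis
    using connected_subset_inside[OF assms] connected_subset_outside[OF assms] by blast
qed simp

lemma closure_subset_inside:
  fixes S :: "'a::real_normed_vector set"
  assumes "closed S" "T \<subseteq> inside S"
  shows "closure T \<subseteq> S \<union> inside S"
  using closure_mono[OF assms(2)] closure_inside_subset[OF assms(1)] by blast

lemma Jordan_two_arcs:
  fixes c1 c2 :: "real \<Rightarrow> complex"
  assumes "arc c1" "arc c2" "pathstart c2 = pathstart c1" "pathfinish c2 = pathfinish c1"
    and "path_image c1 \<inter> path_image c2 \<subseteq> {pathstart c1, pathfinish c1}"
  shows "inside (path_image c1 \<union> path_image c2) \<noteq> {}"
    and "connected (inside (path_image c1 \<union> path_image c2))"
    and "connected (outside (path_image c1 \<union> path_image c2))"
    and "frontier (inside (path_image c1 \<union> path_image c2)) = path_image c1 \<union> path_image c2"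
proof -
  have loop: "simple_path (c1 +++ reversepath c2)"
    using assms by (subst simple_path_join_loop_eq) (auto simp: arc_reversepath)
  have closed: "pathfinish (c1 +++ reversepath c2) = pathstart (c1 +++ reversepath c2)"
    using assms by simp
  have image: "path_image (c1 +++ reversepath c2) = path_image c1 \<union> path_image c2"
    using assms by (simp add: path_image_join)
  note Jordan = Jordan_inside_outside[OF loop closed, unfolded image]
  show "inside (path_image c1 \<union> path_image c2) \<noteq> {}"
    and "connected (inside (path_image c1 \<union> path_image c2))"
    and "connected (outside (path_image c1 \<union> path_image c2))"
    and "frontier (inside (path_image c1 \<union> path_image c2)) = path_image c1 \<union> path_image c2"
    using Jordan by auto
qed

section \<open>Theta graphs\<close>

locale theta =
  fixes x y :: complex and A B C :: "real \<Rightarrow> complex"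
  assumes arcs: "arc A" "arc B" "arc C"
    and starts: "pathstart A = x" "pathstart B = x" "pathstart C = x"
    and finishes: "pathfinish A = y" "pathfinish B = y" "pathfinish C = y"
    and meet: "path_image A \<inter> path_image B \<subseteq> {x, y}" "path_image A \<inter> path_image C \<subseteq> {x, y}"
      "path_image B \<inter> path_image C \<subseteq> {x, y}"
begin

lemma swap_AB: "theta x y B A C"
  using arcs starts finishes meet by unfold_locales (auto simp: Int_commute)

lemma swap_BC: "theta x y A C B"
  using arcs starts finishes meet by unfold_locales (auto simp: Int_commute)

lemma ends_distinct: "x \<noteq> y"
  using arc_distinct_ends[OF arcs(1)] starts finishes by simp

lemma ends_in_images:
  "x \<in> path_image A" "y \<in> path_image A" "x \<in> path_image B" "y \<in> path_image B"
  "x \<in> path_image C" "y \<in> path_image C"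
  using pathstart_in_path_image[of A] pathfinish_in_path_image[of A] pathstart_in_path_image[of B]
    pathfinish_in_path_image[of B] pathstart_in_path_image[of C] pathfinish_in_path_image[of C]
  by (simp_all add: starts finishes)

lemma closed_images: "closed (path_image A)" "closed (path_image B)" "closed (path_image C)"
  using arcs by (simp_all add: closed_path_image arc_imp_path)

lemma Jordan_AB:
  "inside (path_image A \<union> path_image B) \<noteq> {}"
  "connected (inside (path_image A \<union> path_image B))"
  "connected (outside (path_image A \<union> path_image B))"
  "frontier (inside (path_image A \<union> path_image B)) = path_image A \<union> path_image B"
  using Jordan_two_arcs[OF arcs(1,2)] starts finishes meet(1) by simp_all

lemma meet_eq:
  "path_image A \<inter> path_image B = {x, y}" "path_image A \<inter> path_image C = {x, y}"
  "path_image B \<inter> path_image C = {x, y}"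
  using meet ends_in_images by auto

lemma split_inside_AB:
  assumes "path_image C \<inter> inside (path_image A \<union> path_image B) \<noteq> {}"
  shows "inside (path_image A \<union> path_image C) \<inter> inside (path_image B \<union> path_image C) = {}"
    and "inside (path_image A \<union> path_image C) \<union> inside (path_image B \<union> path_image C) \<union>
           arc_interior C = inside (path_image A \<union> path_image B)"
proof -
  obtain "inside (path_image A \<union> path_image C) \<inter> inside (path_image B \<union> path_image C) = {}"
    and "inside (path_image A \<union> path_image C) \<union> inside (path_image B \<union> path_image C) \<union>
           (path_image C - {x, y}) = inside (path_image A \<union> path_image B)"
    by (rule split_inside_simple_closed_curve[of A x y B C])
      (use assms arcs starts finishes ends_distinct meet_eq in \<open>simp_all add: arc_imp_simple_path\<close>)
  then show "inside (path_image A \<union> path_image C) \<inter> inside (path_image B \<union> path_image C) = {}"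
    and "inside (path_image A \<union> path_image C) \<union> inside (path_image B \<union> path_image C) \<union>
           arc_interior C = inside (path_image A \<union> path_image B)"
    using starts finishes by simp_all
qed

lemma inside_connector_impossible:
  assumes p: "p \<in> arc_interior A" and q: "q \<in> arc_interior B"
    and F: "connected F" "p \<in> closure F" "q \<in> closure F"
      "F \<inter> (path_image A \<union> path_image B \<union> path_image C) = {}"
    and C_in: "arc_interior C \<subseteq> inside (path_image A \<union> path_image B)"
    and F_in: "F \<subseteq> inside (path_image A \<union> path_image B)"
  shows False
proof -
  let ?A = "path_image A" and ?B = "path_image B" and ?C = "path_image C"
  have p_off: "p \<notin> ?B \<union> ?C" and q_off: "q \<notin> ?A \<union> ?C"
    using p q meet_eq starts finishes by auto
  have "?C \<inter> inside (?A \<union> ?B) \<noteq> {}"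
    using C_in nonempty_simple_path_endless[OF arc_imp_simple_path[OF arcs(3)]] by blast
  note split = split_inside_AB[OF this]
  have F_split: "F \<subseteq> inside (?A \<union> ?C) \<union> inside (?B \<union> ?C)"
    using F_in F(4) split(2) by blast
  have "inside (?A \<union> ?C) \<inter> F = {} \<or> inside (?B \<union> ?C) \<inter> F = {}"
    by (rule connectedD[OF F(1)]) (use split(1) F_split closed_images in \<open>auto intro: open_inside\<close>)
  then show False
  proof
    assume "inside (?A \<union> ?C) \<inter> F = {}"
    then have "F \<subseteq> inside (?B \<union> ?C)"
      using F_split by blast
    then have "p \<in> ?B \<union> ?C \<union> inside (?B \<union> ?C)"
      using closure_subset_inside[OF closed_Un[OF closed_images(2,3)]] F(2) by blast
    moreover have "p \<notin> inside (?B \<union> ?C)"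
      using p split(2) inside_no_overlap[of "?A \<union> ?B"] by blast
    ultimately show False
      using p_off by blast
  next
    assume "inside (?B \<union> ?C) \<inter> F = {}"
    then have "F \<subseteq> inside (?A \<union> ?C)"
      using F_split by blast
    then have "q \<in> ?A \<union> ?C \<union> inside (?A \<union> ?C)"
      using closure_subset_inside[OF closed_Un[OF closed_images(1,3)]] F(3) by blast
    moreover have "q \<notin> inside (?A \<union> ?C)"
      using q split(2) inside_no_overlap[of "?A \<union> ?B"] by blast
    ultimately show False
      using q_off by blast
  qed
qed

text \<open>A point inside A \<union> B but outside both A \<union> C and B \<union> C could be joined to infinity avoiding
  A \<union> C and avoiding B \<union> C; since these meet in the connected set C, Janiszewski's theorem joins it
  to infinity avoiding A \<union> B.\<close>

lemma inside_AB_subset: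
  assumes C_out: "arc_interior C \<subseteq> outside (path_image A \<union> path_image B)"
  shows "inside (path_image A \<union> path_image B) \<subseteq>
           inside (path_image A \<union> path_image C) \<union> inside (path_image B \<union> path_image C)"
proof
  let ?A = "path_image A" and ?B = "path_image B" and ?C = "path_image C"
  fix z assume z: "z \<in> inside (?A \<union> ?B)"
  have z_AB: "z \<notin> ?A \<union> ?B"
    using z inside_no_overlap by blast
  have z_C: "z \<notin> ?C"
  proof
    assume "z \<in> ?C"
    moreover have "z \<notin> {x, y}"
      using z_AB ends_in_images by blast
    ultimately have "z \<in> outside (?A \<union> ?B)"
      using C_out starts finishes by auto
    then show False
      using z inside_Int_outside by blast
  qed
  show "z \<in> inside (?A \<union> ?C) \<union> inside (?B \<union> ?C)"
  proof (rule ccontr)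
    assume "z \<notin> inside (?A \<union> ?C) \<union> inside (?B \<union> ?C)"
    then have z_out: "z \<in> outside (?A \<union> ?C)" "z \<in> outside (?B \<union> ?C)"
      using z_AB z_C inside_Un_outside by blast+
    have "bounded (?A \<union> ?B \<union> ?C)"
      using arcs by (simp add: bounded_path_image arc_imp_path)
    then obtain w where w: "w \<in> outside (?A \<union> ?B \<union> ?C)"
      using outside_bounded_nonempty by blast
    have w_out: "w \<in> outside (?A \<union> ?C)" "w \<in> outside (?B \<union> ?C)" "w \<in> outside (?A \<union> ?B)"
      using w outside_mono[of "?A \<union> ?C" "?A \<union> ?B \<union> ?C"] outside_mono[of "?B \<union> ?C" "?A \<union> ?B \<union> ?C"]
        outside_mono[of "?A \<union> ?B" "?A \<union> ?B \<union> ?C"] by blast+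
    have "connected_component (- (?A \<union> ?C)) z w"
      by (rule connected_component_outside[OF theta.Jordan_AB(3)[OF swap_BC] z_out(1) w_out(1)])
    moreover have "connected_component (- (?B \<union> ?C)) z w"
      by (rule connected_component_outside[OF theta.Jordan_AB(3)[OF theta.swap_BC[OF swap_AB]]
            z_out(2) w_out(2)])
    moreover have "connected ((?A \<union> ?C) \<inter> (?B \<union> ?C))"
    proof -
      have "(?A \<union> ?C) \<inter> (?B \<union> ?C) = ?C"
        using meet(1) ends_in_images by blast
      then show ?thesis
        using arcs by (simp add: connected_path_image arc_imp_path)
    qed
    moreover have "compact (?A \<union> ?C)" "closed (?B \<union> ?C)"
      using arcs closed_images by (simp_all add: compact_Un compact_path_image closed_Un arc_imp_path)
    ultimately have "connected_component (- (?A \<union> ?C \<union> (?B \<union> ?C))) z w"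
      using Janiszewski by blast
    then have "connected_component (- (?A \<union> ?B)) z w"
      by (rule connected_component_of_subset) blast
    then have "z \<in> outside (?A \<union> ?B)"
      using outside_connected_component w_out(3) by blast
    then show False
      using z inside_Int_outside by blast
  qed
qed

lemma outside_connector_impossible:
  assumes p: "p \<in> arc_interior A" and q: "q \<in> arc_interior B"
    and F: "connected F" "p \<in> closure F" "q \<in> closure F"
      "F \<inter> (path_image A \<union> path_image B \<union> path_image C) = {}"
    and C_out: "arc_interior C \<subseteq> outside (path_image A \<union> path_image B)"
    and F_out: "F \<subseteq> outside (path_image A \<union> path_image B)"
    and z: "z \<in> inside (path_image A \<union> path_image B)" "z \<in> inside (path_image A \<union> path_image C)"
  shows False
proof -
  let ?A = "path_image A" and ?B = "path_image B" and ?C = "path_image C"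
  have p_off: "p \<notin> ?B \<union> ?C" and q_off: "q \<notin> ?A \<union> ?C"
    using p q meet_eq starts finishes by auto
  have "?C \<subseteq> arc_interior C \<union> ?A"
    using ends_in_images starts finishes by auto
  then have C_off: "?C \<inter> inside (?A \<union> ?B) = {}"
    using C_out inside_no_overlap[of "?A \<union> ?B"] inside_Int_outside[of "?A \<union> ?B"] by blast
  have "q \<in> closure (inside (?A \<union> ?B))"
    using Jordan_AB(4) q by (auto simp: frontier_def)
  note inside_q = connected_insert_closure[OF Jordan_AB(2) this]
  have "insert q (inside (?A \<union> ?B)) \<inter> (?A \<union> ?C) = {}"
    using q_off C_off inside_no_overlap[of "?A \<union> ?B"] by blast
  then have "insert q (inside (?A \<union> ?B)) \<subseteq> inside (?A \<union> ?C)"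
    by (rule connected_subset_inside[OF inside_q]) (use z in auto)
  then have q_in: "q \<in> inside (?A \<union> ?C)"
    by blast
  have "insert q F \<inter> (?A \<union> ?C) = {}"
    using q_off F(4) by blast
  then have F_in: "F \<subseteq> inside (?A \<union> ?C)"
    using connected_subset_inside[OF connected_insert_closure[OF F(1,3)]] q_in by blast
  have "?B \<inter> inside (?A \<union> ?C) \<noteq> {}"
    using q q_in by blast
  note split = theta.split_inside_AB[OF swap_BC this]
  have "F \<subseteq> inside (?C \<union> ?B)"
    using split(2) F_in F(4) F_out inside_Int_outside[of "?A \<union> ?B"] by blast
  then have "p \<in> ?C \<union> ?B \<union> inside (?C \<union> ?B)"
    using closure_subset_inside[OF closed_Un[OF closed_images(3,2)]] F(2) by blast
  moreover have "p \<notin> inside (?C \<union> ?B)"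
    using p split(2) inside_no_overlap[of "?A \<union> ?C"] by blast
  ultimately show False
    using p_off by blast
qed

lemma connector_separated_from_C:
  assumes p: "p \<in> arc_interior A" and q: "q \<in> arc_interior B"
    and F: "connected F" "p \<in> closure F" "q \<in> closure F"
      "F \<inter> (path_image A \<union> path_image B \<union> path_image C) = {}"
  shows "\<not> ((arc_interior C \<subseteq> inside (path_image A \<union> path_image B) \<and>
              F \<subseteq> inside (path_image A \<union> path_image B)) \<or>
            (arc_interior C \<subseteq> outside (path_image A \<union> path_image B) \<and>
              F \<subseteq> outside (path_image A \<union> path_image B)))"
proof
  let ?A = "path_image A" and ?B = "path_image B" and ?C = "path_image C"
  assume "(arc_interior C \<subseteq> inside (?A \<union> ?B) \<and> F \<subseteq> inside (?A \<union> ?B)) \<or>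
    (arc_interior C \<subseteq> outside (?A \<union> ?B) \<and> F \<subseteq> outside (?A \<union> ?B))"
  then show False
  proof (elim disjE conjE)
    assume "arc_interior C \<subseteq> inside (?A \<union> ?B)" "F \<subseteq> inside (?A \<union> ?B)"
    then show False
      by (rule inside_connector_impossible[OF p q F])
  next
    assume C_out: "arc_interior C \<subseteq> outside (?A \<union> ?B)" and F_out: "F \<subseteq> outside (?A \<union> ?B)"
    obtain z where z: "z \<in> inside (?A \<union> ?B)"
      using Jordan_AB(1) by blast
    then have "z \<in> inside (?A \<union> ?C) \<or> z \<in> inside (?B \<union> ?C)"
      using inside_AB_subset[OF C_out] by blast
    then show False
    proof
      assume "z \<in> inside (?A \<union> ?C)"
      then show False
        by (rule outside_connector_impossible[OF p q F C_out F_out z])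
    next
      assume "z \<in> inside (?B \<union> ?C)"
      then show False
        using theta.outside_connector_impossible[OF swap_AB q p F(1,3,2), of z] F(4) C_out F_out z
        by (simp add: Un_commute Un_left_commute)
    qed
  qed
qed

end

section \<open>Plane drawings contain no K33\<close>

definition K33_free :: "'a set set \<Rightarrow> bool" where
  "K33_free E \<longleftrightarrow> \<not> (\<exists>x0 x1 x2 y0 y1 y2. distinct [x0, x1, x2, y0, y1, y2] \<and>
     (\<forall>x\<in>{x0, x1, x2}. \<forall>y\<in>{y0, y1, y2}. {x, y} \<in> E))"

definition hexagon :: "'a \<Rightarrow> 'a \<Rightarrow> 'a \<Rightarrow> 'a \<Rightarrow> 'a \<Rightarrow> 'a \<Rightarrow> 'a set set" where
  "hexagon x0 x1 x2 y0 y1 y2 = {{x0, y0}, {y0, x1}, {x1, y1}, {y1, x2}, {x2, y2}, {y2, x0}}"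

lemma hexagon_rotate: "hexagon x1 x2 x0 y1 y2 y0 = hexagon x0 x1 x2 y0 y1 y2"
  by (auto simp: hexagon_def)

locale plane_drawing =
  fixes V :: "'a set" and E :: "'a set set"
    and p :: "'a \<Rightarrow> complex" and \<gamma> :: "'a set \<Rightarrow> real \<Rightarrow> complex"
  assumes edge_subset: "e \<in> E \<Longrightarrow> e \<subseteq> V"
    and inj_p: "inj_on p V"
    and arc_edge: "e \<in> E \<Longrightarrow> arc (\<gamma> e)"
    and edge_ends: "e \<in> E \<Longrightarrow> {pathstart (\<gamma> e), pathfinish (\<gamma> e)} = p ` e"
    and edges_meet: "e \<in> E \<Longrightarrow> e' \<in> E \<Longrightarrow> e \<noteq> e' \<Longrightarrow>
      path_image (\<gamma> e) \<inter> path_image (\<gamma> e') \<subseteq> p ` (e \<inter> e')"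

lemma planar_graph_plane_drawing:
  fixes V :: "'a set" and E :: "'a set set"
  assumes "planar_graph V E"
  obtains p \<gamma> where "plane_drawing V E p \<gamma>"
proof -
  have "simple_graph V E"
    using assms by (simp add: planar_graph_def)
  then have "e \<subseteq> V" if "e \<in> E" for e
    using that unfolding simple_graph_def by force
  moreover obtain p :: "'a \<Rightarrow> complex" and \<gamma> :: "'a set \<Rightarrow> real \<Rightarrow> complex" where "inj_on p V"
    and "\<forall>e\<in>E. arc (\<gamma> e) \<and> {pathstart (\<gamma> e), pathfinish (\<gamma> e)} = p ` e \<and>
                 path_image (\<gamma> e) \<inter> p ` V = p ` e"
    and "\<forall>e\<in>E. \<forall>e'\<in>E. e \<noteq> e' \<longrightarrow> path_image (\<gamma> e) \<inter> path_image (\<gamma> e') \<subseteq> p ` (e \<inter> e')"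
    using assms unfolding planar_graph_def by blast
  ultimately have "plane_drawing V E p \<gamma>"
    by unfold_locales blast+
  then show thesis
    by (rule that)
qed

context plane_drawing
begin

definition edge_path :: "'a \<Rightarrow> 'a \<Rightarrow> real \<Rightarrow> complex" where
  "edge_path u v = (if pathstart (\<gamma> {u, v}) = p u then \<gamma> {u, v} else reversepath (\<gamma> {u, v}))"

lemma edge_path:
  assumes "{u, v} \<in> E"
  shows "arc (edge_path u v)" "pathstart (edge_path u v) = p u" "pathfinish (edge_path u v) = p v"
    and "path_image (edge_path u v) = path_image (\<gamma> {u, v})"
proof -
  let ?g = "\<gamma> {u, v}"
  have arc: "arc ?g"
    using arc_edge[OF assms] .
  have ends: "{pathstart ?g, pathfinish ?g} = {p u, p v}"
    using edge_ends[OF assms] by simp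
  have "pathstart ?g \<noteq> pathfinish ?g"
    using arc_distinct_ends[OF arc] by simp
  with ends[unfolded doubleton_eq_iff] have "pathstart ?g = p u \<and> pathfinish ?g = p v \<or>
      pathstart ?g \<noteq> p u \<and> pathstart ?g = p v \<and> pathfinish ?g = p u"
    by auto
  then show "arc (edge_path u v)" "pathstart (edge_path u v) = p u" "pathfinish (edge_path u v) = p v"
    and "path_image (edge_path u v) = path_image ?g"
    using arc by (auto simp: edge_path_def arc_reversepath)
qed

lemma edge_ends_in_image:
  assumes "{u, v} \<in> E"
  shows "p u \<in> path_image (\<gamma> {u, v})" "p v \<in> path_image (\<gamma> {u, v})"
  using edge_ends[OF assms] pathstart_in_path_image[of "\<gamma> {u, v}"]
    pathfinish_in_path_image[of "\<gamma> {u, v}"] by (auto simp: doubleton_eq_iff)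

lemma arc_interior_edge: "e \<in> E \<Longrightarrow> arc_interior (\<gamma> e) = path_image (\<gamma> e) - p ` e"
  using edge_ends by simp

lemma edge_images_meet:
  assumes "F \<subseteq> E" "F' \<subseteq> E" "F \<inter> F' = {}"
  shows "(\<Union>e\<in>F. path_image (\<gamma> e)) \<inter> (\<Union>e\<in>F'. path_image (\<gamma> e)) \<subseteq> p ` (\<Union>F \<inter> \<Union>F')"
proof
  fix z assume "z \<in> (\<Union>e\<in>F. path_image (\<gamma> e)) \<inter> (\<Union>e\<in>F'. path_image (\<gamma> e))"
  then obtain e e' where e: "e \<in> F" "e' \<in> F'" and z: "z \<in> path_image (\<gamma> e) \<inter> path_image (\<gamma> e')"
    by blast
  have "e \<noteq> e'"
    using e assms(3) by blast
  then have "z \<in> p ` (e \<inter> e')"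
    using edges_meet[of e e'] e z assms(1,2) by blast
  moreover have "e \<inter> e' \<subseteq> \<Union>F \<inter> \<Union>F'"
    using e by blast
  ultimately show "z \<in> p ` (\<Union>F \<inter> \<Union>F')"
    by blast
qed

lemma edge_interior_inside_or_outside:
  assumes "e \<in> E" "F \<subseteq> E" "e \<notin> F"
  shows "arc_interior (\<gamma> e) \<subseteq> inside (\<Union>e\<in>F. path_image (\<gamma> e)) \<or>
    arc_interior (\<gamma> e) \<subseteq> outside (\<Union>e\<in>F. path_image (\<gamma> e))"
proof (rule connected_inside_or_outside)
  show "connected (arc_interior (\<gamma> e))"
    by (rule connected_simple_path_endless[OF arc_imp_simple_path[OF arc_edge[OF assms(1)]]])
  have "(\<Union>e\<in>{e}. path_image (\<gamma> e)) \<inter> (\<Union>e\<in>F. path_image (\<gamma> e)) \<subseteq> p ` (\<Union>{e} \<inter> \<Union>F)"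
    by (rule edge_images_meet) (use assms in auto)
  then show "arc_interior (\<gamma> e) \<inter> (\<Union>e\<in>F. path_image (\<gamma> e)) = {}"
    using arc_interior_edge[OF assms(1)] by auto
qed

lemma edges_meet_at:
  assumes "{u, v} \<in> E" "{v, w} \<in> E" "u \<noteq> w"
  shows "path_image (\<gamma> {u, v}) \<inter> path_image (\<gamma> {v, w}) \<subseteq> {p v}"
proof -
  have "{u, v} \<inter> {v, w} = {v}"
    using assms(3) by auto
  then have image: "p ` ({u, v} \<inter> {v, w}) = {p v}"
    by (simp only: image_insert image_empty)
  have "{u, v} \<noteq> {v, w}"
    using assms(3) by (auto simp: doubleton_eq_iff)
  then show ?thesis
    using edges_meet[OF assms(1,2)] image by blast
qed

lemma edges_disjoint:
  assumes "e \<in> E" "e' \<in> E" "e \<inter> e' = {}" "e \<noteq> {}"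
  shows "path_image (\<gamma> e) \<inter> path_image (\<gamma> e') = {}"
proof -
  have "e \<noteq> e'"
    using assms(3,4) by blast
  then show ?thesis
    using edges_meet[OF assms(1,2)] assms(3) by simp
qed

lemma edge_path3:
  assumes "{u, v} \<in> E" "{v, w} \<in> E" "{w, t} \<in> E" "distinct [u, v, w, t]"
  defines "g \<equiv> edge_path u v +++ edge_path v w +++ edge_path w t"
  shows "arc g" "pathstart g = p u" "pathfinish g = p t"
    and "path_image g = (\<Union>e\<in>{{u, v}, {v, w}, {w, t}}. path_image (\<gamma> e))"
proof -
  have vw_wt: "path_image (\<gamma> {v, w}) \<inter> path_image (\<gamma> {w, t}) \<subseteq> {p w}"
    using edges_meet_at[OF assms(2,3)] assms(4) by simp
  have "path_image (\<gamma> {u, v}) \<inter> path_image (\<gamma> {v, w}) \<subseteq> {p v}"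
    using edges_meet_at[OF assms(1,2)] assms(4) by simp
  moreover have "path_image (\<gamma> {u, v}) \<inter> path_image (\<gamma> {w, t}) = {}"
    using edges_disjoint[OF assms(1,3)] assms(4) by auto
  ultimately have uv_vwt: "path_image (\<gamma> {u, v}) \<inter> (path_image (\<gamma> {v, w}) \<union> path_image (\<gamma> {w, t}))
      \<subseteq> {p v}"
    by blast
  have "arc (edge_path v w +++ edge_path w t)"
    using vw_wt assms(2,3) by (intro arc_join) (simp_all add: edge_path)
  then show "arc g"
    unfolding g_def using uv_vwt vw_wt assms(1-3) by (intro arc_join) (simp_all add: edge_path path_image_join)
  show "pathstart g = p u" "pathfinish g = p t"
    and "path_image g = (\<Union>e\<in>{{u, v}, {v, w}, {w, t}}. path_image (\<gamma> e))"
    unfolding g_def using assms(1-3) by (simp_all add: edge_path path_image_join)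
qed

text \<open>The ends of the chord {x0, y1} split the hexagon into the arcs A (through y0, x1) and
  B (through y2, x2); with the chord C they form a theta graph, and the chord {x1, y2} joins
  the interiors of A and B.\<close>

lemma K33_chords_separated:
  assumes dist: "distinct [x0, x1, x2, y0, y1, y2]"
    and edges: "\<forall>x\<in>{x0, x1, x2}. \<forall>y\<in>{y0, y1, y2}. {x, y} \<in> E"
  defines "H \<equiv> \<Union>e\<in>hexagon x0 x1 x2 y0 y1 y2. path_image (\<gamma> e)"
  shows "\<not> ((arc_interior (\<gamma> {x0, y1}) \<subseteq> inside H \<and> arc_interior (\<gamma> {x1, y2}) \<subseteq> inside H) \<or>
            (arc_interior (\<gamma> {x0, y1}) \<subseteq> outside H \<and> arc_interior (\<gamma> {x1, y2}) \<subseteq> outside H))"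
proof -
  have E: "{x0, y0} \<in> E" "{y0, x1} \<in> E" "{x1, y1} \<in> E" "{x0, y2} \<in> E" "{y2, x2} \<in> E"
    "{x2, y1} \<in> E" "{x0, y1} \<in> E" "{x1, y2} \<in> E"
    using edges by (simp_all add: insert_commute)
  have V: "x0 \<in> V" "x1 \<in> V" "y1 \<in> V" "y2 \<in> V"
    using edge_subset E(7,8) by blast+
  define FA where "FA = {{x0, y0}, {y0, x1}, {x1, y1}}"
  define FB where "FB = {{x0, y2}, {y2, x2}, {x2, y1}}"
  define A where "A = edge_path x0 y0 +++ edge_path y0 x1 +++ edge_path x1 y1"
  define B where "B = edge_path x0 y2 +++ edge_path y2 x2 +++ edge_path x2 y1"
  define C where "C = edge_path x0 y1"
  have "distinct [x0, y0, x1, y1]" "distinct [x0, y2, x2, y1]"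
    using dist by auto
  note A = edge_path3[OF E(1-3) this(1), folded A_def FA_def]
    and B = edge_path3[OF E(4-6) this(2), folded B_def FB_def]
  note C = edge_path[OF E(7), folded C_def]
  have FC: "path_image C = (\<Union>e\<in>{{x0, y1}}. path_image (\<gamma> e))"
    using C by simp
  have meet: "(\<Union>e\<in>F. path_image (\<gamma> e)) \<inter> (\<Union>e\<in>F'. path_image (\<gamma> e)) \<subseteq> p ` S"
    if "F \<subseteq> E" "F' \<subseteq> E" "F \<inter> F' = {}" "\<Union>F \<inter> \<Union>F' \<subseteq> S" for F F' S
    using edge_images_meet[OF that(1-3)] that(4) by blast
  have AB: "path_image A \<inter> path_image B \<subseteq> p ` {x0, y1}"
    unfolding A(4) B(4) by (rule meet) (use E dist in \<open>auto simp: FA_def FB_def doubleton_eq_iff\<close>)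
  have AC: "path_image A \<inter> path_image C \<subseteq> p ` {x0, y1}"
    unfolding A(4) FC by (rule meet) (use E dist in \<open>auto simp: FA_def doubleton_eq_iff\<close>)
  have BC: "path_image B \<inter> path_image C \<subseteq> p ` {x0, y1}"
    unfolding B(4) FC by (rule meet) (use E dist in \<open>auto simp: FB_def doubleton_eq_iff\<close>)
  have theta: "theta (p x0) (p y1) A B C"
    by unfold_locales (use A(1-3) B(1-3) C(1-3) AB AC BC in simp_all)
  have "p x0 \<noteq> p x1" "p y1 \<noteq> p x1" "p x0 \<noteq> p y2" "p y1 \<noteq> p y2"
    using inj_on_contraD[OF inj_p] V dist by auto
  moreover have "p x1 \<in> path_image A" "p y2 \<in> path_image B"
    using edge_ends_in_image E(3,4) by (auto simp: A(4) B(4) FA_def FB_def)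
  ultimately have p: "p x1 \<in> arc_interior A" and q: "p y2 \<in> arc_interior B"
    using A(2,3) B(2,3) by auto
  let ?F = "arc_interior (\<gamma> {x1, y2})"
  have "connected ?F"
    using connected_simple_path_endless arc_imp_simple_path arc_edge[OF E(8)] by blast
  moreover have "p x1 \<in> closure ?F" "p y2 \<in> closure ?F"
    using simple_path_image_subset_closure_endless[OF arc_imp_simple_path[OF arc_edge[OF E(8)]]]
      edge_ends_in_image[OF E(8)] by blast+
  moreover have "?F \<inter> (path_image A \<union> path_image B \<union> path_image C) = {}"
  proof -
    have "(\<Union>e\<in>{{x1, y2}}. path_image (\<gamma> e)) \<inter> (\<Union>e\<in>FA \<union> FB \<union> {{x0, y1}}. path_image (\<gamma> e))
        \<subseteq> p ` {x1, y2}"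
      by (rule meet) (use E dist in \<open>auto simp: FA_def FB_def doubleton_eq_iff\<close>)
    then show ?thesis
      using arc_interior_edge[OF E(8)] by (auto simp: A(4) B(4) FC)
  qed
  ultimately have "\<not> ((arc_interior C \<subseteq> inside (path_image A \<union> path_image B) \<and>
        ?F \<subseteq> inside (path_image A \<union> path_image B)) \<or>
      (arc_interior C \<subseteq> outside (path_image A \<union> path_image B) \<and>
        ?F \<subseteq> outside (path_image A \<union> path_image B)))"
    using theta.connector_separated_from_C[OF theta p q] by blast
  moreover have "hexagon x0 x1 x2 y0 y1 y2 = FA \<union> FB"
    by (auto simp: hexagon_def FA_def FB_def insert_commute)
  then have "H = path_image A \<union> path_image B"
    by (simp add: H_def A(4) B(4))
  moreover have "arc_interior C = arc_interior (\<gamma> {x0, y1})"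
    using C(2,3,4) arc_interior_edge[OF E(7)] by simp
  ultimately show ?thesis
    by simp
qed

theorem K33_free: "K33_free E"
  unfolding K33_free_def
proof clarify
  fix x0 x1 x2 y0 y1 y2
  assume dist: "distinct [x0, x1, x2, y0, y1, y2]"
    and edges: "\<forall>x\<in>{x0, x1, x2}. \<forall>y\<in>{y0, y1, y2}. {x, y} \<in> E"
  let ?H = "\<Union>e\<in>hexagon x0 x1 x2 y0 y1 y2. path_image (\<gamma> e)"
  have "hexagon x0 x1 x2 y0 y1 y2 \<subseteq> E"
    using edges by (simp add: hexagon_def insert_commute)
  moreover have "{x0, y1} \<in> E" "{x1, y2} \<in> E" "{x2, y0} \<in> E"
    using edges by simp_all
  moreover have "{x0, y1} \<notin> hexagon x0 x1 x2 y0 y1 y2" "{x1, y2} \<notin> hexagon x0 x1 x2 y0 y1 y2"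
    "{x2, y0} \<notin> hexagon x0 x1 x2 y0 y1 y2"
    using dist by (auto simp: hexagon_def doubleton_eq_iff)
  ultimately have side:
    "arc_interior (\<gamma> {x0, y1}) \<subseteq> inside ?H \<or> arc_interior (\<gamma> {x0, y1}) \<subseteq> outside ?H"
    "arc_interior (\<gamma> {x1, y2}) \<subseteq> inside ?H \<or> arc_interior (\<gamma> {x1, y2}) \<subseteq> outside ?H"
    "arc_interior (\<gamma> {x2, y0}) \<subseteq> inside ?H \<or> arc_interior (\<gamma> {x2, y0}) \<subseteq> outside ?H"
    using edge_interior_inside_or_outside by blast+
  have "distinct [x1, x2, x0, y1, y2, y0]" "distinct [x2, x0, x1, y2, y0, y1]"
    using dist by auto
  moreover have "\<forall>x\<in>{x1, x2, x0}. \<forall>y\<in>{y1, y2, y0}. {x, y} \<in> E"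
    "\<forall>x\<in>{x2, x0, x1}. \<forall>y\<in>{y2, y0, y1}. {x, y} \<in> E"
    using edges by auto
  moreover have "hexagon x1 x2 x0 y1 y2 y0 = hexagon x0 x1 x2 y0 y1 y2"
    "hexagon x2 x0 x1 y2 y0 y1 = hexagon x0 x1 x2 y0 y1 y2"
    using hexagon_rotate[of x0 x1 x2 y0 y1 y2] hexagon_rotate[of x1 x2 x0 y1 y2 y0] by simp_all
  ultimately have
    "\<not> ((arc_interior (\<gamma> {x1, y2}) \<subseteq> inside ?H \<and> arc_interior (\<gamma> {x2, y0}) \<subseteq> inside ?H) \<or>
      (arc_interior (\<gamma> {x1, y2}) \<subseteq> outside ?H \<and> arc_interior (\<gamma> {x2, y0}) \<subseteq> outside ?H))"
    "\<not> ((arc_interior (\<gamma> {x2, y0}) \<subseteq> inside ?H \<and> arc_interior (\<gamma> {x0, y1}) \<subseteq> inside ?H) \<or>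
      (arc_interior (\<gamma> {x2, y0}) \<subseteq> outside ?H \<and> arc_interior (\<gamma> {x0, y1}) \<subseteq> outside ?H))"
    using K33_chords_separated[of x1 x2 x0 y1 y2 y0] K33_chords_separated[of x2 x0 x1 y2 y0 y1]
    by simp_all
  then show False
    using K33_chords_separated[OF dist edges] side by blast
qed

end

section \<open>Teaching closed neighbourhoods\<close>

lemma K33_free_common_neighbours:
  assumes "K33_free E" "distinct [x0, x1, x2]"
    and common: "\<And>y. y \<in> Y \<Longrightarrow> y \<notin> {x0, x1, x2} \<and> (\<forall>x\<in>{x0, x1, x2}. {x, y} \<in> E)"
  shows "card Y \<le> 2"
proof (rule ccontr)
  assume "\<not> card Y \<le> 2"
  then obtain Y3 where "Y3 \<subseteq> Y" "card Y3 = 3"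
    using obtain_subset_with_card_n[of 3 Y] by force
  then obtain y0 y1 y2 where "Y3 = {y0, y1, y2}" "distinct [y0, y1, y2]" and "{y0, y1, y2} \<subseteq> Y"
    by (auto simp: card_3_iff)
  then have "distinct [x0, x1, x2, y0, y1, y2] \<and> (\<forall>x\<in>{x0, x1, x2}. \<forall>y\<in>{y0, y1, y2}. {x, y} \<in> E)"
    using assms(2) common by fastforce
  then show False
    using assms(1) unfolding K33_free_def by blast
qed

lemma simple_graph_edge_distinct:
  assumes "simple_graph V E" "{x, y} \<in> E"
  shows "x \<noteq> y"
proof -
  have "\<forall>e\<in>E. \<exists>s t. e = {s, t} \<and> s \<noteq> t \<and> s \<in> V \<and> t \<in> V"
    using assms(1) by (simp add: simple_graph_def)
  from bspec[OF this assms(2)] obtain s t where "{x, y} = {s, t}" "s \<noteq> t"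
    by blast
  then show ?thesis
    by (auto simp: doubleton_eq_iff)
qed

lemma mem_closed_nbhd_iff: "w \<in> closed_nbhd V E u \<longleftrightarrow> w = u \<or> w \<in> V \<and> {w, u} \<in> E"
  by (auto simp: closed_nbhd_def)

definition nbhd_certificate :: "'a set \<Rightarrow> 'a set set \<Rightarrow> 'a \<Rightarrow> 'a set \<Rightarrow> bool" where
  "nbhd_certificate V E v S \<longleftrightarrow> S \<subseteq> closed_nbhd V E v \<and>
     (\<forall>u\<in>V. {u, v} \<in> E \<longrightarrow> S \<subseteq> closed_nbhd V E u \<longrightarrow> closed_nbhd V E v \<subseteq> closed_nbhd V E u)"

lemma K33_free_nbhd_certificate:
  assumes graph: "simple_graph V E" and "K33_free E" and v: "v \<in> V"
  obtains S where "nbhd_certificate V E v S" "finite S" "card S \<le> 4"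
proof (cases "\<forall>a\<in>V. \<forall>b\<in>V. {a, v} \<in> E \<longrightarrow> {b, v} \<in> E \<longrightarrow> a \<noteq> b \<longrightarrow> {a, b} \<in> E")
  case True
  have "closed_nbhd V E v \<subseteq> closed_nbhd V E u" if "u \<in> V" "{u, v} \<in> E" for u
  proof
    fix w assume "w \<in> closed_nbhd V E v"
    then have "w = v \<or> w = u \<or> w \<in> V \<and> {w, v} \<in> E \<and> w \<noteq> u"
      by (auto simp: mem_closed_nbhd_iff)
    then show "w \<in> closed_nbhd V E u"
      using True that v by (auto simp: mem_closed_nbhd_iff insert_commute)
  qed
  then have "nbhd_certificate V E v {}"
    unfolding nbhd_certificate_def by blast
  then show ?thesis
    using that by simp
next
  case False
  let ?N = "closed_nbhd V E"
  obtain a b where ab: "a \<in> V" "b \<in> V" "{a, v} \<in> E" "{b, v} \<in> E" "a \<noteq> b" "{a, b} \<notin> E"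
    using False by blast
  note loopfree = simple_graph_edge_distinct[OF graph]
  define C where "C = {u \<in> V. {u, v} \<in> E \<and> a \<in> ?N u \<and> b \<in> ?N u \<and> \<not> ?N v \<subseteq> ?N u}"
  have "card C \<le> 2"
  proof (rule K33_free_common_neighbours[OF \<open>K33_free E\<close>])
    show "distinct [v, a, b]"
      using ab loopfree[of a v] loopfree[of b v] by auto
    fix u assume "u \<in> C"
    then have u: "{u, v} \<in> E" "a \<in> ?N u" "b \<in> ?N u"
      by (auto simp: C_def)
    then have "u \<noteq> a" "u \<noteq> b"
      using ab by (auto simp: mem_closed_nbhd_iff insert_commute)
    then show "u \<notin> {v, a, b} \<and> (\<forall>x\<in>{v, a, b}. {x, u} \<in> E)"
      using u loopfree[of u v] by (auto simp: mem_closed_nbhd_iff insert_commute)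
  qed
  have "finite C"
    using graph by (simp add: simple_graph_def C_def)
  have "\<forall>u\<in>C. \<exists>w. w \<in> ?N v \<and> w \<notin> ?N u"
    by (auto simp: C_def)
  from bchoice[OF this] obtain m where m: "\<forall>u\<in>C. m u \<in> ?N v \<and> m u \<notin> ?N u"
    by blast
  define S where "S = {a, b} \<union> m ` C"
  have "nbhd_certificate V E v S"
    unfolding nbhd_certificate_def
  proof (intro conjI ballI impI)
    show "S \<subseteq> ?N v"
      using ab m by (auto simp: S_def mem_closed_nbhd_iff)
    fix u assume u: "u \<in> V" "{u, v} \<in> E" "S \<subseteq> ?N u"
    show "?N v \<subseteq> ?N u"
    proof (rule ccontr)
      assume "\<not> ?N v \<subseteq> ?N u"
      moreover have "a \<in> ?N u" "b \<in> ?N u"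
        using u(3) by (auto simp: S_def)
      ultimately have "u \<in> C"
        using u(1,2) unfolding C_def by blast
      then show False
        using m u(3) by (auto simp: S_def)
    qed
  qed
  moreover have "finite S"
    using \<open>finite C\<close> by (simp add: S_def)
  moreover have "card S \<le> 4"
  proof -
    have "card S \<le> card {a, b} + card (m ` C)"
      unfolding S_def by (rule card_Un_le)
    also have "\<dots> \<le> 2 + card C"
      using card_image_le[OF \<open>finite C\<close>, of m] by (simp add: card_insert_if)
    finally show ?thesis
      using \<open>card C \<le> 2\<close> by linarith
  qed
  ultimately show ?thesis
    by (rule that)
qed

lemma nbhd_certificate_distinguishes:
  assumes "nbhd_certificate V E r S" "r' \<in> V" "{r', r} \<in> E"
    and "\<not> closed_nbhd V E r \<subseteq> closed_nbhd V E r'"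
  shows "\<exists>w\<in>S. distinguishes w (closed_nbhd V E r) (closed_nbhd V E r')"
proof -
  have "S \<subseteq> closed_nbhd V E r" "\<not> S \<subseteq> closed_nbhd V E r'"
    using assms unfolding nbhd_certificate_def by blast+
  then show ?thesis
    unfolding distinguishes_def by blast
qed

lemma closed_nbhds_distinguished:
  assumes S: "nbhd_certificate V E r S" and S': "nbhd_certificate V E r' S'"
    and r: "r \<in> V" "r' \<in> V" and ne: "closed_nbhd V E r \<noteq> closed_nbhd V E r'"
  shows "\<exists>w\<in>insert r S \<union> insert r' S'. distinguishes w (closed_nbhd V E r) (closed_nbhd V E r')"
proof (cases "{r', r} \<in> E")
  case False
  have "r \<noteq> r'"
    using ne by blast
  then have "distinguishes r (closed_nbhd V E r) (closed_nbhd V E r')"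
    using False by (simp add: distinguishes_def mem_closed_nbhd_iff insert_commute)
  then show ?thesis
    by blast
next
  case True
  then have "{r, r'} \<in> E"
    by (simp add: insert_commute)
  have "distinguishes w B B' \<longleftrightarrow> distinguishes w B' B" for w and B B' :: "'a set"
    unfolding distinguishes_def by blast
  then show ?thesis
    using ne nbhd_certificate_distinguishes[OF S r(2) True]
      nbhd_certificate_distinguishes[OF S' r(1) \<open>{r, r'} \<in> E\<close>] by blast
qed

theorem NCTD_closed_nbhds_le:
  assumes "\<And>v. v \<in> V \<Longrightarrow> \<exists>S. nbhd_certificate V E v S \<and> finite S \<and> card S \<le> k"
  shows "NCTD V (closed_nbhd V E ` V) \<le> Suc k"
proof -
  let ?N = "closed_nbhd V E"
  obtain S where S: "\<And>v. v \<in> V \<Longrightarrow> nbhd_certificate V E v (S v) \<and> finite (S v) \<and> card (S v) \<le> k"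
    using assms by metis
  define rep where "rep B = inv_into V ?N B" for B
  have rep: "rep B \<in> V" "?N (rep B) = B" if "B \<in> ?N ` V" for B
    using that by (simp_all add: rep_def inv_into_into f_inv_into_f)
  define T where "T B = insert (rep B) (S (rep B))" for B
  have "teaching_map V (?N ` V) T"
    unfolding teaching_map_def T_def nbhd_certificate_def
    using rep(1) S unfolding nbhd_certificate_def closed_nbhd_def by blast
  moreover have "non_clashing (?N ` V) T"
    unfolding non_clashing_def T_def
    using closed_nbhds_distinguished S rep by metis
  moreover have "finite (T B) \<and> card (T B) \<le> Suc k" if "B \<in> ?N ` V" for B
    using S[OF rep(1)[OF that]] by (simp add: T_def card_insert_if)
  ultimately show ?thesis
    unfolding NCTD_def by (intro Least_le) blast
qed

theorem theorem7:
  fixes V :: "'a set" and E :: "'a set set"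
  assumes "planar_graph V E"
  shows "NCTD V ((closed_nbhd V E) ` V) \<le> 5"
proof -
  have graph: "simple_graph V E"
    using assms by (simp add: planar_graph_def)
  obtain p \<gamma> where "plane_drawing V E p \<gamma>"
    using planar_graph_plane_drawing[OF assms] .
  then have "K33_free E"
    by (rule plane_drawing.K33_free)
  then have "\<exists>S. nbhd_certificate V E v S \<and> finite S \<and> card S \<le> 4" if "v \<in> V" for v
    using K33_free_nbhd_certificate[OF graph _ that] by blast
  then show ?thesis
    using NCTD_closed_nbhds_le[of V E 4] by simp
qed

end
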